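(* Let $A,B,X\in T^1(\Sigma)$. Then $AX=BX$ if and only if $AX^+=BX^+$; and $XA=XB$ if and only if $X^*A=X^*B$ (all operations pruned).
   Context: Let $\Sigma$ be a set. A $\Sigma$-tree is a finite directed graph whose underlying undirected graph is a tree, edges labelled by elements of $\Sigma$, with distinguished start and end vertices such that there is a (possibly empty) directed path from start to end vertex. A morphism $X\to Y$ maps vertices to vertices and edges to edges, preserving initial vertex, terminal vertex and label of each edge, and mapping start/end vertex to start/end vertex; isomorphisms are morphisms bijective on vertices and edges. A retraction is an idempotent morphism $X\to X$, its image a retract; $X$ is pruned if it admits no non-identity retraction. Every tree $X$ has a pruned retract, unique up to isomorphism, whose isomorphism type is $\overline{X}$. $T^1(\Sigma)$ is the set of isomorphism types of pruned $\Sigma$-trees. Unpruned operations: $X\times Y$ identifies the end vertex of (a copy of) $X$ with the start vertex of (a disjoint copy of) $Y$, start vertex that of $X$, end vertex that of $Y$; $X^{(+)}$ is $X$ with end vertex moved to the start vertex; $X^{( * )}$ is $X$ with start vertex moved to the end vertex. Pruned operations: $XY=\overline{X\times Y}$, $X^+=\overline{X^{(+)}}$, $X^*=\overline{X^{( * )}}$. *)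

theory Defs
  imports Main
begin

text \<open>Since the underlying undirected graph is a tree, there are no
parallel edges, so edges are determined by such triples.  The label alphabet Sigma is
the type 'l.\<close>

record 'l stree =
  verts :: "nat set"
  edges :: "(nat \<times> 'l \<times> nat) set"
  st :: nat
  en :: nat

definition uadj :: "'l stree \<Rightarrow> (nat \<times> nat) set" where
  "uadj X = {(u, v). \<exists>a. (u, a, v) \<in> edges X \<or> (v, a, u) \<in> edges X}"

definition dadj :: "'l stree \<Rightarrow> (nat \<times> nat) set" where
  "dadj X = {(u, v). \<exists>a. (u, a, v) \<in> edges X}"

definition is_tree :: "'l stree \<Rightarrow> bool" where
  "is_tree X \<longleftrightarrow> finite (verts X) \<and> finite (edges X)
     \<and> (\<forall>(u, a, v) \<in> edges X. u \<in> verts X \<and> v \<in> verts X)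
     \<and> st X \<in> verts X \<and> en X \<in> verts X
     \<and> (\<forall>u \<in> verts X. \<forall>v \<in> verts X. (u, v) \<in> (uadj X)\<^sup>*)
     \<and> card (edges X) + 1 = card (verts X)
     \<and> (st X, en X) \<in> (dadj X)\<^sup>*"

definition emap :: "(nat \<Rightarrow> nat) \<Rightarrow> nat \<times> 'l \<times> nat \<Rightarrow> nat \<times> 'l \<times> nat" where
  "emap f = (\<lambda>(u, a, v). (f u, a, f v))"

text \<open>Morphisms (given by their vertex map; the edge map is then forced).\<close>
definition hom :: "'l stree \<Rightarrow> 'l stree \<Rightarrow> (nat \<Rightarrow> nat) \<Rightarrow> bool" where
  "hom X Y f \<longleftrightarrow> f ` verts X \<subseteq> verts Y \<and> emap f ` edges X \<subseteq> edges Y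
     \<and> f (st X) = st Y \<and> f (en X) = en Y"

definition iso :: "'l stree \<Rightarrow> 'l stree \<Rightarrow> bool" where
  "iso X Y \<longleftrightarrow> (\<exists>f. hom X Y f \<and> bij_betw f (verts X) (verts Y)
                     \<and> bij_betw (emap f) (edges X) (edges Y))"

definition retraction :: "'l stree \<Rightarrow> (nat \<Rightarrow> nat) \<Rightarrow> bool" where
  "retraction X r \<longleftrightarrow> hom X X r \<and> (\<forall>v \<in> verts X. r (r v) = r v)"

definition image_tree :: "'l stree \<Rightarrow> (nat \<Rightarrow> nat) \<Rightarrow> 'l stree" where
  "image_tree X r = \<lparr>verts = r ` verts X, edges = emap r ` edges X, st = st X, en = en X\<rparr>"

definition is_retract_of :: "'l stree \<Rightarrow> 'l stree \<Rightarrow> bool" where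
  "is_retract_of P X \<longleftrightarrow> (\<exists>r. retraction X r \<and> P = image_tree X r)"

definition pruned :: "'l stree \<Rightarrow> bool" where
  "pruned X \<longleftrightarrow> is_tree X \<and> (\<forall>r. retraction X r \<longrightarrow> (\<forall>v \<in> verts X. r v = v))"

text \<open>A chosen pruned retract (representative of the isomorphism type bar X).\<close>
definition prune :: "'l stree \<Rightarrow> 'l stree" where
  "prune X = (SOME P. is_retract_of P X \<and> pruned P)"

text \<open>Unpruned product: disjoint copies (X on even, Y on odd numbers), gluing the end
vertex of X to the start vertex of Y.\<close>
definition glueY :: "'l stree \<Rightarrow> 'l stree \<Rightarrow> nat \<Rightarrow> nat" where
  "glueY X Y v = (if v = st Y then 2 * en X else 2 * v + 1)"

definition tprod :: "'l stree \<Rightarrow> 'l stree \<Rightarrow> 'l stree" where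
  "tprod X Y = \<lparr>verts = (\<lambda>v. 2 * v) ` verts X \<union> glueY X Y ` verts Y,
                 edges = emap (\<lambda>v. 2 * v) ` edges X \<union> emap (glueY X Y) ` edges Y,
                 st = 2 * st X, en = glueY X Y (en Y)\<rparr>"

definition tplus_u :: "'l stree \<Rightarrow> 'l stree" where
  "tplus_u X = X\<lparr>en := st X\<rparr>"

definition tstar_u :: "'l stree \<Rightarrow> 'l stree" where
  "tstar_u X = X\<lparr>st := en X\<rparr>"

definition pmult :: "'l stree \<Rightarrow> 'l stree \<Rightarrow> 'l stree" where
  "pmult X Y = prune (tprod X Y)"

definition pplus :: "'l stree \<Rightarrow> 'l stree" where
  "pplus X = prune (tplus_u X)"

definition pstar :: "'l stree \<Rightarrow> 'l stree" where
  "pstar X = prune (tstar_u X)"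

end

theory Submission
  imports Defs
begin

text \<open>Isomorphism of pruned retracts is homomorphic equivalence of the trees themselves,
and the operations respect homomorphic equivalence, so both claims concern morphisms between
unpruned products. A tree carries a level function that increases by one along every edge,
so all directed walks between two vertices have the same length; since every start-to-end
walk of A X passes through the glue vertex, any morphism A X \<rightarrow> B X maps glue vertex to glue
vertex and is thus also a morphism A X^(+) \<rightarrow> B X^(+). Conversely (A X^(+)) X is
homomorphically equivalent to A X. The second claim is the mirror image, with X^(*) A.\<close>

section \<open>Morphisms\<close>

definition graph_hom :: "'l stree \<Rightarrow> 'l stree \<Rightarrow> (nat \<Rightarrow> nat) \<Rightarrow> bool" where
  "graph_hom X Y f \<longleftrightarrow> f ` verts X \<subseteq> verts Y \<and> emap f ` edges X \<subseteq> edges Y"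

definition hom_equiv :: "'l stree \<Rightarrow> 'l stree \<Rightarrow> bool" where
  "hom_equiv S T \<longleftrightarrow> (\<exists>f. hom S T f) \<and> (\<exists>g. hom T S g)"

lemma emap_apply [simp]: "emap f (u, a, v) = (f u, a, f v)"
  by (simp add: emap_def)

lemma emap_comp: "emap (g \<circ> f) = emap g \<circ> emap f"
  by (auto simp: emap_def fun_eq_iff)

lemma emap_id [simp]: "emap id = id" "emap (\<lambda>x. x) = id"
  by (auto simp: emap_def fun_eq_iff)

lemma inj_on_emap:
  assumes "inj_on f (verts P)" "\<forall>(u, a, v) \<in> edges P. u \<in> verts P \<and> v \<in> verts P"
  shows "inj_on (emap f) (edges P)"
proof (rule inj_onI)
  fix d e assume d: "d \<in> edges P" and e: "e \<in> edges P" and eq: "emap f d = emap f e"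
  obtain u a v u' a' v' where de: "d = (u, a, v)" "e = (u', a', v')" by (cases d, cases e) auto
  then have "u \<in> verts P" "v \<in> verts P" "u' \<in> verts P" "v' \<in> verts P"
    using assms(2) d e by auto
  with eq de assms(1) show "d = e" by (auto dest: inj_onD)
qed

lemma hom_iff_graph_hom: "hom X Y f \<longleftrightarrow> graph_hom X Y f \<and> f (st X) = st Y \<and> f (en X) = en Y"
  by (auto simp: hom_def graph_hom_def)

lemma graph_hom_comp: "graph_hom X Y f \<Longrightarrow> graph_hom Y Z g \<Longrightarrow> graph_hom X Z (g \<circ> f)"
  unfolding graph_hom_def emap_comp image_comp[symmetric] by (meson image_mono subset_trans)

lemma graph_hom_id: "graph_hom X X (\<lambda>x. x)"
  by (simp add: graph_hom_def)

lemma graph_hom_upd [simp]: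
  "graph_hom X (Y\<lparr>en := e\<rparr>) f = graph_hom X Y f" "graph_hom X (Y\<lparr>st := e\<rparr>) f = graph_hom X Y f"
  "graph_hom (X\<lparr>en := e\<rparr>) Y f = graph_hom X Y f" "graph_hom (X\<lparr>st := e\<rparr>) Y f = graph_hom X Y f"
  by (simp_all add: graph_hom_def)

lemma hom_comp: "hom X Y f \<Longrightarrow> hom Y Z g \<Longrightarrow> hom X Z (g \<circ> f)"
  unfolding hom_iff_graph_hom using graph_hom_comp by fastforce

lemma hom_id: "hom X X id"
  by (simp add: hom_def)

lemma hom_upd_en: "hom S T f \<Longrightarrow> f e = e' \<Longrightarrow> hom (S\<lparr>en := e\<rparr>) (T\<lparr>en := e'\<rparr>) f"
  by (simp add: hom_def)

lemma hom_upd_st: "hom S T f \<Longrightarrow> f e = e' \<Longrightarrow> hom (S\<lparr>st := e\<rparr>) (T\<lparr>st := e'\<rparr>) f"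
  by (simp add: hom_def)

lemma hom_equiv_refl: "hom_equiv X X"
  using hom_id unfolding hom_equiv_def by blast

lemma hom_equiv_sym: "hom_equiv X Y \<Longrightarrow> hom_equiv Y X"
  unfolding hom_equiv_def by blast

lemma hom_equiv_trans: "hom_equiv X Y \<Longrightarrow> hom_equiv Y Z \<Longrightarrow> hom_equiv X Z"
  unfolding hom_equiv_def using hom_comp by blast

lemma hom_equiv_cong:
  assumes "hom_equiv S S'" "hom_equiv T T'"
  shows "hom_equiv S T \<longleftrightarrow> hom_equiv S' T'"
proof
  assume "hom_equiv S T"
  then show "hom_equiv S' T'"
    using hom_equiv_trans[OF hom_equiv_trans[OF hom_equiv_sym[OF assms(1)]] assms(2)] by blast
next
  assume "hom_equiv S' T'"
  then show "hom_equiv S T"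
    using hom_equiv_trans[OF hom_equiv_trans[OF assms(1)] hom_equiv_sym[OF assms(2)]] by blast
qed

lemma dadj_relpow_image:
  assumes "emap f ` edges X \<subseteq> edges Y" "(x, y) \<in> dadj X ^^ n"
  shows "(f x, f y) \<in> dadj Y ^^ n"
  using assms(2)
proof (induction n arbitrary: y)
  case (Suc n)
  then obtain z a where "(x, z) \<in> dadj X ^^ n" "(z, a, y) \<in> edges X"
    by (auto simp: dadj_def)
  moreover from this(2) have "(f z, f y) \<in> dadj Y"
    using assms(1) by (force simp: dadj_def)
  ultimately show ?case using Suc.IH by auto
qed simp

lemma uadj_rtrancl_image:
  assumes "emap f ` edges X \<subseteq> edges Y" "(x, y) \<in> (uadj X)\<^sup>*"
  shows "(f x, f y) \<in> (uadj Y)\<^sup>*"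
  using assms(2)
proof (induction rule: rtrancl_induct)
  case (step y z)
  then obtain a where "(y, a, z) \<in> edges X \<or> (z, a, y) \<in> edges X" by (auto simp: uadj_def)
  then have "(f y, f z) \<in> uadj Y" using assms(1) by (force simp: uadj_def)
  with step.IH show ?case by (meson rtrancl_into_rtrancl)
qed simp

section \<open>Edge counts and levels in trees\<close>

definition induced_edges :: "'l stree \<Rightarrow> nat set \<Rightarrow> (nat \<times> 'l \<times> nat) set" where
  "induced_edges G S = {(u, a, v). (u, a, v) \<in> edges G \<and> u \<in> S \<and> v \<in> S}"

definition connected_graph :: "'l stree \<Rightarrow> bool" where
  "connected_graph G \<longleftrightarrow> finite (verts G) \<and> finite (edges G)
     \<and> (\<forall>(u, a, v) \<in> edges G. u \<in> verts G \<and> v \<in> verts G)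
     \<and> (\<forall>u \<in> verts G. \<forall>v \<in> verts G. (u, v) \<in> (uadj G)\<^sup>*)"

lemma tree_walk: "is_tree X \<Longrightarrow> \<exists>n. (st X, en X) \<in> dadj X ^^ n"
  by (simp add: is_tree_def rtrancl_power)

lemma tree_connected_graph: "is_tree X \<Longrightarrow> connected_graph X"
  by (simp add: is_tree_def connected_graph_def)

lemma induced_edges_subset: "induced_edges G S \<subseteq> edges G"
  by (auto simp: induced_edges_def)

lemma finite_induced_edges: "finite (edges G) \<Longrightarrow> finite (induced_edges G S)"
  using finite_subset[OF induced_edges_subset] .

lemma induced_edges_verts: "connected_graph G \<Longrightarrow> induced_edges G (verts G) = edges G"
  by (auto simp: induced_edges_def connected_graph_def)

lemma rtrancl_exits_set:
  assumes "(a, b) \<in> R\<^sup>*" "a \<in> S" "b \<notin> S"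
  shows "\<exists>x y. (x, y) \<in> R \<and> x \<in> S \<and> y \<notin> S"
  using assms by (induction rule: rtrancl_induct) auto

lemma connected_graph_exit_edge:
  assumes G: "connected_graph G" and S: "S \<subseteq> verts G" "S \<noteq> {}" "S \<noteq> verts G"
  obtains u a v x where "(u, a, v) \<in> edges G" "x \<in> verts G" "x \<notin> S"
    "(u \<in> S \<and> v = x) \<or> (v \<in> S \<and> u = x)"
proof -
  obtain s y where "s \<in> S" "y \<in> verts G" "y \<notin> S" using S by blast
  with S G have "(s, y) \<in> (uadj G)\<^sup>*" unfolding connected_graph_def by blast
  then obtain p q where pq: "(p, q) \<in> uadj G" "p \<in> S" "q \<notin> S"
    using rtrancl_exits_set \<open>s \<in> S\<close> \<open>y \<notin> S\<close> by metis
  then obtain a where e: "(p, a, q) \<in> edges G \<or> (q, a, p) \<in> edges G" by (auto simp: uadj_def)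
  then have "q \<in> verts G" using G unfolding connected_graph_def by blast
  with e pq that show ?thesis by blast
qed

text \<open>Adding the vertices outside a nonempty set S one at a time along exit edges,
each new vertex brings at least one new edge.\<close>
lemma connected_graph_card_induced_edges:
  assumes G: "connected_graph G" and "S \<subseteq> verts G" "S \<noteq> {}"
  shows "card (verts G) + card (induced_edges G S) \<le> card (edges G) + card S"
  using assms(2,3)
proof (induction "card (verts G - S)" arbitrary: S rule: less_induct)
  case less
  have finV: "finite (verts G)" and finE: "finite (edges G)"
    using G by (auto simp: connected_graph_def)
  show ?case
  proof (cases "S = verts G")
    case True
    then show ?thesis using induced_edges_verts[OF G] by simp
  next
    case False
    then obtain u a v x where e: "(u, a, v) \<in> edges G" "x \<in> verts G" "x \<notin> S"
      "(u \<in> S \<and> v = x) \<or> (v \<in> S \<and> u = x)"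
      using connected_graph_exit_edge[OF G less.prems] by blast
    have "card (verts G - insert x S) < card (verts G - S)"
    proof -
      have "verts G - insert x S = (verts G - S) - {x}" "x \<in> verts G - S" using e(2,3) by blast+
      then show ?thesis using card_Diff1_less[of "verts G - S" x] finV by simp
    qed
    then have IH: "card (verts G) + card (induced_edges G (insert x S)) \<le> card (edges G) + card (insert x S)"
      using less.hyps less.prems e(2) by blast
    have "insert (u, a, v) (induced_edges G S) \<subseteq> induced_edges G (insert x S)"
      "(u, a, v) \<notin> induced_edges G S"
      using e less.prems by (auto simp: induced_edges_def)
    then have "card (induced_edges G S) + 1 \<le> card (induced_edges G (insert x S))"
      by (metis Suc_eq_plus1 card_insert_disjoint card_mono finE finite_induced_edges)
    moreover have "card (insert x S) = card S + 1"
      using e(3) finite_subset[OF less.prems(1) finV] by simp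
    ultimately show ?thesis using IH by linarith
  qed
qed

lemma tree_card_induced_edges:
  assumes "is_tree T" "S \<subseteq> verts T" "S \<noteq> {}"
  shows "card (induced_edges T S) + 1 \<le> card S"
  using connected_graph_card_induced_edges[OF tree_connected_graph[OF assms(1)] assms(2,3)] assms(1)
  unfolding is_tree_def by linarith

lemma tree_no_loop:
  assumes "is_tree T"
  shows "(u, a, u) \<notin> edges T"
proof
  assume e: "(u, a, u) \<in> edges T"
  then have "u \<in> verts T" using assms unfolding is_tree_def by blast
  moreover have "induced_edges T {u} \<noteq> {}" using e by (auto simp: induced_edges_def)
  moreover have "finite (induced_edges T {u})"
    using assms finite_induced_edges unfolding is_tree_def by blast
  ultimately show False
    using tree_card_induced_edges[OF assms, of "{u}"] by (simp add: card_gt_0_iff)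
qed

text \<open>The hypothesis on S says that it spans a subtree; the edge count of T leaves no
room for a second new induced edge.\<close>
lemma tree_induced_edges_insert:
  assumes T: "is_tree T" and S: "S \<subseteq> verts T" "card (induced_edges T S) + 1 = card S"
    and e: "(u, a, v) \<in> edges T" "x \<in> verts T" "x \<notin> S" "(u \<in> S \<and> v = x) \<or> (v \<in> S \<and> u = x)"
  shows "induced_edges T (insert x S) = insert (u, a, v) (induced_edges T S)"
    "(u, a, v) \<notin> induced_edges T S"
proof -
  have finV: "finite (verts T)" and finE: "finite (induced_edges T (insert x S))"
    using T finite_induced_edges by (auto simp: is_tree_def)
  have sub: "insert (u, a, v) (induced_edges T S) \<subseteq> induced_edges T (insert x S)"
    using e by (auto simp: induced_edges_def)
  have S': "insert x S \<subseteq> verts T" using S(1) e(2) by blast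
  show new: "(u, a, v) \<notin> induced_edges T S"
    using e by (auto simp: induced_edges_def)
  have "card (insert (u, a, v) (induced_edges T S)) = card S"
    using new S(2) finite_subset[OF sub finE] by simp
  moreover have "card (induced_edges T (insert x S)) + 1 \<le> card (insert x S)"
    by (rule tree_card_induced_edges[OF T S']) simp
  moreover have "card (insert x S) = card S + 1"
    using e(3) finite_subset[OF S(1) finV] by simp
  ultimately have "card (insert (u, a, v) (induced_edges T S)) = card (induced_edges T (insert x S))"
    using card_mono[OF finE sub] by linarith
  then show "induced_edges T (insert x S) = insert (u, a, v) (induced_edges T S)"
    using card_subset_eq[OF finE sub] by simp
qed

lemma level_extend_exit_edge:
  assumes "\<forall>(p, b, q) \<in> induced_edges T S. \<phi> q = \<phi> p + (1::int)" "x \<notin> S"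
    "(u \<in> S \<and> v = x) \<or> (v \<in> S \<and> u = x)"
  defines "\<psi> \<equiv> \<phi>(x := if v = x then \<phi> u + 1 else \<phi> v - 1)"
  shows "\<forall>(p, b, q) \<in> insert (u, a, v) (induced_edges T S). \<psi> q = \<psi> p + 1"
proof
  fix d assume "d \<in> insert (u, a, v) (induced_edges T S)"
  then show "case d of (p, b, q) \<Rightarrow> \<psi> q = \<psi> p + 1"
  proof
    assume "d \<in> induced_edges T S"
    moreover obtain p b q where "d = (p, b, q)" by (cases d)
    ultimately have "p \<in> S" "q \<in> S" "\<phi> q = \<phi> p + 1"
      using assms(1) by (auto simp: induced_edges_def)
    then show ?thesis using assms(2) \<open>d = (p, b, q)\<close> by (auto simp: \<psi>_def)
  qed (use assms(2,3) in \<open>auto simp: \<psi>_def\<close>)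
qed

text \<open>Grow S one exit edge at a time; by the previous lemmas the level function only
has to be extended along the exit edge.\<close>
lemma tree_level_extends:
  assumes T: "is_tree T" and "S \<subseteq> verts T" "S \<noteq> {}" "card (induced_edges T S) + 1 = card S"
    and "\<forall>(u, a, v) \<in> induced_edges T S. \<phi> v = \<phi> u + (1::int)"
  shows "\<exists>\<psi>. \<forall>(u, a, v) \<in> edges T. \<psi> v = \<psi> u + (1::int)"
  using assms(2-)
proof (induction "card (verts T - S)" arbitrary: S \<phi> rule: less_induct)
  case less
  have G: "connected_graph T" using tree_connected_graph[OF T] .
  have finV: "finite (verts T)" and finE: "finite (edges T)"
    using T by (auto simp: is_tree_def)
  show ?case
  proof (cases "S = verts T")
    case True
    then show ?thesis using less.prems(4) induced_edges_verts[OF G] by auto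
  next
    case False
    then obtain u a v x where e: "(u, a, v) \<in> edges T" "x \<in> verts T" "x \<notin> S"
      "(u \<in> S \<and> v = x) \<or> (v \<in> S \<and> u = x)"
      using connected_graph_exit_edge[OF G less.prems(1,2)] by blast
    note grown = tree_induced_edges_insert[OF T less.prems(1,3) e]
    define \<psi> where "\<psi> = \<phi>(x := if v = x then \<phi> u + 1 else \<phi> v - 1)"
    have level: "\<forall>(p, b, q) \<in> induced_edges T (insert x S). \<psi> q = \<psi> p + 1"
      unfolding grown(1) \<psi>_def by (rule level_extend_exit_edge[OF less.prems(4) e(3,4)])
    have "card (verts T - insert x S) < card (verts T - S)"
    proof -
      have "verts T - insert x S = (verts T - S) - {x}" "x \<in> verts T - S" using e(2,3) by auto
      then show ?thesis using card_Diff1_less[of "verts T - S" x] finV by simp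
    qed
    moreover have "card (induced_edges T (insert x S)) + 1 = card (insert x S)"
      using grown less.prems(3) e(3) finite_subset[OF less.prems(1) finV]
        finite_induced_edges[OF finE] by simp
    ultimately show ?thesis
      using less.hyps[OF _ _ _ _ level] less.prems(1) e(2) by simp
  qed
qed

lemma tree_level:
  assumes T: "is_tree T"
  obtains \<phi> :: "nat \<Rightarrow> int" where "\<forall>(u, a, v) \<in> edges T. \<phi> v = \<phi> u + 1"
proof -
  have st: "st T \<in> verts T" and finE: "finite (edges T)" using T by (auto simp: is_tree_def)
  then have "card (induced_edges T {st T}) = 0"
    using tree_card_induced_edges[OF T, of "{st T}"] by simp
  then have "induced_edges T {st T} = {}" using finite_induced_edges[OF finE] by simp
  then have "\<exists>\<psi>. \<forall>(u, a, v) \<in> edges T. \<psi> v = \<psi> u + (1::int)"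
    using tree_level_extends[OF T, of "{st T}"] st by simp
  then show ?thesis using that by blast
qed

lemma level_relpow:
  assumes "\<forall>(u, a, v) \<in> edges T. \<phi> v = \<phi> u + (1::int)" "(x, y) \<in> dadj T ^^ n"
  shows "\<phi> y = \<phi> x + int n"
  using assms(2)
proof (induction n arbitrary: y)
  case (Suc n)
  then obtain z a where "(x, z) \<in> dadj T ^^ n" "(z, a, y) \<in> edges T" by (auto simp: dadj_def)
  moreover from this(2) have "\<phi> y = \<phi> z + 1" using assms(1) by blast
  ultimately show ?case using Suc.IH by simp
qed simp

lemma tree_walk_length_unique:
  assumes "is_tree T" "(x, y) \<in> dadj T ^^ n" "(x, y) \<in> dadj T ^^ m"
  shows "n = m"
proof -
  obtain \<phi> :: "nat \<Rightarrow> int" where \<phi>: "\<forall>(u, a, v) \<in> edges T. \<phi> v = \<phi> u + 1"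
    using tree_level[OF assms(1)] by blast
  show ?thesis
    using level_relpow[OF \<phi> assms(2)] level_relpow[OF \<phi> assms(3)] by simp
qed

section \<open>Retracts and pruning\<close>

lemma image_tree_simps [simp]:
  "verts (image_tree X r) = r ` verts X" "edges (image_tree X r) = emap r ` edges X"
  "st (image_tree X r) = st X" "en (image_tree X r) = en X"
  by (simp_all add: image_tree_def)

lemma retraction_homs:
  assumes "retraction X r"
  shows "hom X (image_tree X r) r" "hom (image_tree X r) X id"
  using assms by (auto simp: retraction_def hom_def)

lemma retract_is_tree:
  assumes T: "is_tree X" and R: "retraction X r"
  shows "is_tree (image_tree X r)"
proof -
  let ?I = "image_tree X r"
  have rV: "r ` verts X \<subseteq> verts X" and rE: "emap r ` edges X \<subseteq> edges X"
    and "r (st X) = st X" "r (en X) = en X"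
    using R by (auto simp: retraction_def hom_def)
  have finV: "finite (verts X)" and finE: "finite (edges X)"
    and ein: "\<forall>(u, a, v) \<in> edges X. u \<in> verts X \<and> v \<in> verts X"
    and "st X \<in> verts X" "en X \<in> verts X"
    and conn: "\<forall>u \<in> verts X. \<forall>v \<in> verts X. (u, v) \<in> (uadj X)\<^sup>*"
    and walk: "(st X, en X) \<in> (dadj X)\<^sup>*"
    using T by (auto simp: is_tree_def)
  then have ends: "st ?I \<in> verts ?I" "en ?I \<in> verts ?I"
    using \<open>r (st X) = st X\<close> \<open>r (en X) = en X\<close> by (metis image_eqI image_tree_simps)+
  have ein': "\<forall>(u, a, v) \<in> edges ?I. u \<in> verts ?I \<and> v \<in> verts ?I"
    using ein by auto
  have conn': "\<forall>u \<in> verts ?I. \<forall>v \<in> verts ?I. (u, v) \<in> (uadj ?I)\<^sup>*"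
    using uadj_rtrancl_image[of r X ?I] conn by auto
  have walk': "(st ?I, en ?I) \<in> (dadj ?I)\<^sup>*"
    using dadj_relpow_image[of r X ?I] walk \<open>r (st X) = st X\<close> \<open>r (en X) = en X\<close>
    by (simp add: rtrancl_power) (metis image_tree_simps(2) subset_refl)
  have G: "connected_graph ?I" using finV finE ein' conn' by (simp add: connected_graph_def)
  have "card (verts ?I) \<le> card (edges ?I) + 1"
    using connected_graph_card_induced_edges[OF G, of "{st ?I}"] ends by simp
  moreover have "card (edges ?I) + 1 \<le> card (verts ?I)"
  proof -
    have "edges ?I \<subseteq> induced_edges X (r ` verts X)"
      using rE ein by (force simp: induced_edges_def)
    then have "card (edges ?I) \<le> card (induced_edges X (r ` verts X))"
      using card_mono finite_induced_edges[OF finE] by blast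
    moreover have "card (induced_edges X (r ` verts X)) + 1 \<le> card (r ` verts X)"
      using tree_card_induced_edges[OF T rV] \<open>st X \<in> verts X\<close> by blast
    ultimately show ?thesis by simp
  qed
  ultimately show ?thesis unfolding is_tree_def
    using finV finE ein' ends conn' walk' by auto
qed

text \<open>A retraction with the smallest image yields a pruned retract: composing it with
any retraction of its image gives another retraction of X.\<close>
lemma exists_pruned_retract:
  assumes T: "is_tree X"
  shows "\<exists>P. is_retract_of P X \<and> pruned P"
proof -
  have "retraction X id" by (simp add: retraction_def hom_id)
  then obtain r where r: "retraction X r"
    and rmin: "\<And>r'. retraction X r' \<Longrightarrow> card (r ` verts X) \<le> card (r' ` verts X)"
    using ex_has_least_nat[of "retraction X" id "\<lambda>r. card (r ` verts X)"] by blast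
  let ?P = "image_tree X r"
  have finP: "finite (verts ?P)" using T by (simp add: is_tree_def)
  have "s v = v" if s: "retraction ?P s" and v: "v \<in> verts ?P" for s v
  proof -
    have sV: "s ` verts ?P \<subseteq> verts ?P" and sid: "\<forall>w \<in> verts ?P. s (s w) = s w"
      using s by (auto simp: retraction_def hom_def)
    have "hom X X (id \<circ> (s \<circ> r))"
      using s retraction_homs[OF r] by (meson hom_comp retraction_def)
    moreover have "\<forall>w \<in> verts X. r (s (r w)) = s (r w)"
      using r sV by (force simp: retraction_def)
    ultimately have "retraction X (s \<circ> r)"
      using sid by (simp add: retraction_def)
    moreover have "(s \<circ> r) ` verts X = s ` verts ?P" by (simp add: image_comp)
    ultimately have "card (verts ?P) \<le> card (s ` verts ?P)"
      using rmin by fastforce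
    then have "inj_on s (verts ?P)"
      using card_image_le[OF finP] eq_card_imp_inj_on[OF finP] le_antisym by metis
    then show "s v = v" using sV sid v by (meson image_subset_iff inj_onD)
  qed
  then have "pruned ?P" using retract_is_tree[OF T r] by (simp add: pruned_def)
  then show ?thesis using r unfolding is_retract_of_def by blast
qed

lemma prune_pruned_hom_equiv:
  assumes "is_tree X"
  shows "pruned (prune X)" "hom_equiv (prune X) X"
proof -
  have "is_retract_of (prune X) X \<and> pruned (prune X)"
    unfolding prune_def using someI_ex[OF exists_pruned_retract[OF assms]] .
  then show "pruned (prune X)" "hom_equiv (prune X) X"
    using retraction_homs unfolding is_retract_of_def hom_equiv_def by metis+
qed

lemma emap_image_induced_edges:
  assumes "finite (edges P)" "emap g ` edges P \<subseteq> edges P" "inj_on g M" "g ` M = M"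
  shows "emap g ` induced_edges P M = induced_edges P M"
proof -
  have sub: "emap g ` induced_edges P M \<subseteq> induced_edges P M"
    using assms(2,4) by (force simp: induced_edges_def)
  have "inj_on (emap g) (induced_edges P M)"
    using assms(3) by (auto simp: inj_on_def induced_edges_def)
  then show ?thesis
    using card_subset_eq[OF finite_induced_edges[OF assms(1)] sub] card_image by blast
qed

text \<open>r undoes g on its image M; edges inside M survive because g permutes them.\<close>
lemma retraction_onto_image:
  assumes T: "is_tree P" and g: "hom P P g" and inj: "inj_on g (g ` verts P)"
  defines "r \<equiv> \<lambda>v. inv_into (g ` verts P) g (g v)"
  shows "retraction P r" "r ` verts P = g ` verts P"
proof -
  define M where "M = g ` verts P"
  have finV: "finite (verts P)" and finE: "finite (edges P)"
    and ein: "\<forall>(u, a, v) \<in> edges P. u \<in> verts P \<and> v \<in> verts P"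
    and "st P \<in> verts P" "en P \<in> verts P"
    using T by (auto simp: is_tree_def)
  have gV: "g ` verts P \<subseteq> verts P" and gE: "emap g ` edges P \<subseteq> edges P"
    and "g (st P) = st P" "g (en P) = en P" using g by (auto simp: hom_def)
  have finM: "finite M" and MV: "M \<subseteq> verts P" using finV gV by (auto simp: M_def)
  have injM: "inj_on g M" using inj by (simp add: M_def)
  have "g ` M \<subseteq> M" using gV by (auto simp: M_def)
  then have gM: "g ` M = M" using card_subset_eq[OF finM] card_image[OF injM] by blast
  have rM: "r v \<in> M" if "v \<in> verts P" for v
  proof -
    have "g v \<in> M" using that by (simp add: M_def)
    then have "g v \<in> g ` M" by (simp only: gM)
    then show ?thesis unfolding r_def M_def[symmetric] by (rule inv_into_into)
  qed
  have rfix: "r v = v" if "v \<in> M" for v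
    using that injM by (simp add: r_def M_def[symmetric])
  have "emap r ` edges P \<subseteq> edges P"
  proof
    fix e assume "e \<in> emap r ` edges P"
    then obtain u a w where e: "e = (r u, a, r w)" "(u, a, w) \<in> edges P" by auto
    then have "(g u, a, g w) \<in> induced_edges P M"
      using gE ein by (force simp: induced_edges_def M_def)
    then have "(g u, a, g w) \<in> emap g ` induced_edges P M"
      using emap_image_induced_edges[OF finE gE injM gM] by simp
    then obtain d where "(g u, a, g w) = emap g d" "d \<in> induced_edges P M" by (rule imageE)
    moreover obtain x b y where "d = (x, b, y)" by (cases d)
    ultimately have xy: "(x, a, y) \<in> induced_edges P M" "g x = g u" "g y = g w" by auto
    then have "x \<in> M" "y \<in> M" by (auto simp: induced_edges_def)
    then have "r u = x" "r w = y"
      using rfix[of x] rfix[of y] xy(2,3) by (simp_all add: r_def)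
    then show "e \<in> edges P" using e xy(1) by (auto simp: induced_edges_def)
  qed
  moreover have "st P \<in> M" "en P \<in> M"
    using \<open>g (st P) = st P\<close> \<open>g (en P) = en P\<close> \<open>st P \<in> verts P\<close> \<open>en P \<in> verts P\<close>
    by (metis M_def image_eqI)+
  ultimately show "retraction P r"
    using rM MV rfix by (auto simp: retraction_def hom_def)
  show "r ` verts P = g ` verts P"
    using rM rfix MV by (force simp: M_def)
qed

lemma pruned_endo_inj:
  assumes P: "pruned P" and f: "hom P P f"
  shows "inj_on f (verts P)"
proof -
  have T: "is_tree P" using P by (simp add: pruned_def)
  have finV: "finite (verts P)" using T by (simp add: is_tree_def)
  obtain g where g: "hom P P g"
    and gmin: "\<And>g'. hom P P g' \<Longrightarrow> card (g ` verts P) \<le> card (g' ` verts P)"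
    using ex_has_least_nat[of "hom P P" f "\<lambda>g. card (g ` verts P)"] f by blast
  have gV: "g ` verts P \<subseteq> verts P" using g by (simp add: hom_def)
  have "card (g ` verts P) \<le> card (g ` g ` verts P)"
    using gmin[OF hom_comp[OF g g]] by (simp add: image_comp)
  then have "inj_on g (g ` verts P)"
    using finV card_image_le eq_card_imp_inj_on le_antisym by (metis finite_imageI)
  then obtain r where "retraction P r" "r ` verts P = g ` verts P"
    using retraction_onto_image[OF T g] by blast
  moreover from this(1) have "\<forall>v \<in> verts P. r v = v" using P by (simp add: pruned_def)
  ultimately have "g ` verts P = verts P" by simp
  then have "card (verts P) \<le> card (f ` verts P)" using gmin[OF f] by simp
  then show ?thesis
    using card_image_le[OF finV] eq_card_imp_inj_on[OF finV] le_antisym by metis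
qed

lemma pruned_hom_equiv_iso:
  assumes P: "pruned P" and Q: "pruned Q" and f: "hom P Q f" and g: "hom Q P g"
  shows "iso P Q"
proof -
  have finP: "finite (verts P)" "finite (edges P)"
    and eP: "\<forall>(u, a, v) \<in> edges P. u \<in> verts P \<and> v \<in> verts P"
    and finQ: "finite (verts Q)" "finite (edges Q)"
    and eQ: "\<forall>(u, a, v) \<in> edges Q. u \<in> verts Q \<and> v \<in> verts Q"
    using P Q by (auto simp: pruned_def is_tree_def)
  have fV: "f ` verts P \<subseteq> verts Q" and fE: "emap f ` edges P \<subseteq> edges Q"
    and gV: "g ` verts Q \<subseteq> verts P" and gE: "emap g ` edges Q \<subseteq> edges P"
    using f g by (auto simp: hom_def)
  have injf: "inj_on f (verts P)" and injg: "inj_on g (verts Q)"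
    using pruned_endo_inj[OF P hom_comp[OF f g]] pruned_endo_inj[OF Q hom_comp[OF g f]]
    by (auto dest: inj_on_imageI2)
  have "card (verts Q) \<le> card (verts P)" using card_inj_on_le[OF injg gV finP(1)] .
  then have "f ` verts P = verts Q"
    using card_subset_eq[OF finQ(1) fV] card_inj_on_le[OF injf fV finQ(1)] card_image[OF injf]
    by simp
  moreover have injfE: "inj_on (emap f) (edges P)" and injgE: "inj_on (emap g) (edges Q)"
    using inj_on_emap injf injg eP eQ by blast+
  moreover have "emap f ` edges P = edges Q"
    using card_subset_eq[OF finQ(2) fE] card_inj_on_le[OF injfE fE finQ(2)]
      card_inj_on_le[OF injgE gE finP(2)] card_image[OF injfE]
    by simp
  ultimately show ?thesis
    unfolding iso_def bij_betw_def using f injf injfE by blast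
qed

lemma iso_inverse_hom:
  assumes "iso P Q" "is_tree P"
  shows "\<exists>g. hom Q P g"
proof -
  obtain f where f: "hom P Q f" "bij_betw f (verts P) (verts Q)"
    "bij_betw (emap f) (edges P) (edges Q)"
    using assms(1) by (auto simp: iso_def)
  have eP: "\<forall>(u, a, v) \<in> edges P. u \<in> verts P \<and> v \<in> verts P"
    and "st P \<in> verts P" "en P \<in> verts P" using assms(2) by (auto simp: is_tree_def)
  define g where "g = inv_into (verts P) f"
  have inv: "g (f v) = v" if "v \<in> verts P" for v
    using that f(2) by (simp add: g_def bij_betw_def)
  have "g ` verts Q \<subseteq> verts P"
    using f(2) by (auto simp: g_def bij_betw_def inv_into_into)
  moreover have "emap g ` edges Q \<subseteq> edges P"
  proof
    fix e assume "e \<in> emap g ` edges Q"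
    then obtain e' where "e' \<in> edges Q" "e = emap g e'" by blast
    moreover from this(1) obtain d where "d \<in> edges P" "e' = emap f d"
      using f(3) unfolding bij_betw_def by blast
    ultimately have "d \<in> edges P" "e = emap g (emap f d)" by simp_all
    moreover obtain u a w where "d = (u, a, w)" by (cases d)
    ultimately have "u \<in> verts P" "w \<in> verts P" "(u, a, w) \<in> edges P" "e = (g (f u), a, g (f w))"
      using eP by auto
    then show "e \<in> edges P" using inv by simp
  qed
  moreover have "g (st Q) = g (f (st P))" "g (en Q) = g (f (en P))"
    using f(1) by (simp_all add: hom_def)
  then have "g (st Q) = st P" "g (en Q) = en P"
    using inv \<open>st P \<in> verts P\<close> \<open>en P \<in> verts P\<close> by simp_all
  ultimately show ?thesis unfolding hom_def by blast
qed

theorem iso_prune_iff_hom_equiv: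
  assumes "is_tree S" "is_tree T"
  shows "iso (prune S) (prune T) \<longleftrightarrow> hom_equiv S T"
proof -
  have S: "pruned (prune S)" "hom_equiv (prune S) S"
    and T: "pruned (prune T)" "hom_equiv (prune T) T"
    using prune_pruned_hom_equiv assms by blast+
  have "iso (prune S) (prune T) \<longleftrightarrow> hom_equiv (prune S) (prune T)"
    using iso_inverse_hom[of "prune S" "prune T"] pruned_hom_equiv_iso[OF S(1) T(1)] S(1)
    by (auto simp: hom_equiv_def iso_def pruned_def)
  also have "\<dots> \<longleftrightarrow> hom_equiv S T"
    by (rule hom_equiv_cong[OF S(2) T(2)])
  finally show ?thesis .
qed

section \<open>Products and the glue vertex\<close>

lemma inj_emap: "inj f \<Longrightarrow> inj (emap f)"
  by (auto simp: inj_def emap_def)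

lemma tprod_simps [simp]:
  "verts (tprod P Q) = (\<lambda>v. 2 * v) ` verts P \<union> glueY P Q ` verts Q"
  "edges (tprod P Q) = emap (\<lambda>v. 2 * v) ` edges P \<union> emap (glueY P Q) ` edges Q"
  "st (tprod P Q) = 2 * st P" "en (tprod P Q) = glueY P Q (en Q)"
  by (simp_all add: tprod_def)

lemma glueY_st [simp]: "glueY P Q (st Q) = 2 * en P"
  by (simp add: glueY_def)

lemma even_glueY_iff: "even (glueY P Q v) \<longleftrightarrow> v = st Q"
  by (simp add: glueY_def)

lemma inj_glueY: "inj (glueY P Q)"
  by (rule injI) (auto simp: glueY_def split: if_splits, presburger+)

lemma graph_hom_tprod_left: "graph_hom P (tprod P Q) (\<lambda>v. 2 * v)"
  by (simp add: graph_hom_def)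

lemma graph_hom_tprod_right: "graph_hom Q (tprod P Q) (glueY P Q)"
  by (simp add: graph_hom_def)

lemma tprod_connected:
  assumes "is_tree P" "is_tree Q" "u \<in> verts (tprod P Q)" "v \<in> verts (tprod P Q)"
  shows "(u, v) \<in> (uadj (tprod P Q))\<^sup>*"
proof -
  let ?R = "(uadj (tprod P Q))\<^sup>*"
  have to_glue: "(w, 2 * en P) \<in> ?R" if "w \<in> verts (tprod P Q)" for w
  proof -
    from that consider x where "x \<in> verts P" "w = 2 * x" | y where "y \<in> verts Q" "w = glueY P Q y"
      by auto
    then show ?thesis
    proof cases
      case 1
      then have "(x, en P) \<in> (uadj P)\<^sup>*" using assms(1) by (simp add: is_tree_def)
      then show ?thesis
        using uadj_rtrancl_image graph_hom_tprod_left 1 by (metis graph_hom_def)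
    next
      case 2
      then have "(y, st Q) \<in> (uadj Q)\<^sup>*" using assms(2) by (simp add: is_tree_def)
      then show ?thesis
        using uadj_rtrancl_image graph_hom_tprod_right 2 by (metis glueY_st graph_hom_def)
    qed
  qed
  have "sym ?R" by (rule sym_rtrancl) (auto simp: uadj_def sym_def)
  then show ?thesis using to_glue[OF assms(3)] to_glue[OF assms(4)] by (meson rtrancl_trans symD)
qed

lemma card_verts_tprod:
  assumes "finite (verts P)" "finite (verts Q)" "en P \<in> verts P" "st Q \<in> verts Q"
  shows "card (verts (tprod P Q)) + 1 = card (verts P) + card (verts Q)"
proof -
  have "(\<lambda>v. 2 * v) ` verts P \<inter> glueY P Q ` verts Q = {2 * en P}"
  proof
    show "(\<lambda>v. 2 * v) ` verts P \<inter> glueY P Q ` verts Q \<subseteq> {2 * en P}"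
      using even_glueY_iff[of P Q] by (auto, metis dvd_triv_left glueY_st)
    show "{2 * en P} \<subseteq> (\<lambda>v. 2 * v) ` verts P \<inter> glueY P Q ` verts Q"
      using assms(3,4) by (auto intro!: image_eqI[of _ _ "st Q"])
  qed
  moreover have "card ((\<lambda>v. 2 * v) ` verts P) = card (verts P)"
    by (simp add: card_image inj_on_def)
  moreover have "card (glueY P Q ` verts Q) = card (verts Q)"
    using card_image inj_glueY by (metis inj_on_subset subset_UNIV)
  ultimately show ?thesis
    using card_Un_Int[of "(\<lambda>v. 2 * v) ` verts P" "glueY P Q ` verts Q"] assms(1,2) by simp
qed

lemma card_edges_tprod:
  assumes "finite (edges P)" "is_tree Q"
  shows "card (edges (tprod P Q)) = card (edges P) + card (edges Q)"
proof -
  have finQ: "finite (edges Q)" using assms(2) by (simp add: is_tree_def)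
  have disj: "emap (\<lambda>v. 2 * v) ` edges P \<inter> emap (glueY P Q) ` edges Q = {}"
  proof (rule ccontr)
    assume "emap (\<lambda>v. 2 * v) ` edges P \<inter> emap (glueY P Q) ` edges Q \<noteq> {}"
    then obtain u a w x y where "(x, a, y) \<in> edges Q"
      "(2 * u, a, 2 * w) = (glueY P Q x, a, glueY P Q y)" by force
    then have "x = st Q" "y = st Q" "(x, a, y) \<in> edges Q"
      using even_glueY_iff[of P Q] by (metis Pair_inject dvd_triv_left)+
    then show False using tree_no_loop[OF assms(2)] by blast
  qed
  have "inj (emap (\<lambda>v::nat. 2 * v))" by (rule inj_emap) (simp add: inj_def)
  then have "card (emap (\<lambda>v. 2 * v) ` edges P) = card (edges P)"
    by (metis card_image inj_on_subset subset_UNIV)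
  moreover have "card (emap (glueY P Q) ` edges Q) = card (edges Q)"
    by (metis card_image inj_emap inj_glueY inj_on_subset subset_UNIV)
  ultimately show ?thesis
    using card_Un_disjoint[OF finite_imageI[OF assms(1)] finite_imageI[OF finQ] disj] by simp
qed

lemma tprod_is_tree:
  assumes P: "is_tree P" and Q: "is_tree Q"
  shows "is_tree (tprod P Q)"
proof -
  let ?T = "tprod P Q"
  obtain n m where wP: "(st P, en P) \<in> dadj P ^^ n" and wQ: "(st Q, en Q) \<in> dadj Q ^^ m"
    using tree_walk P Q by blast
  have "(2 * st P, 2 * en P) \<in> dadj ?T ^^ n"
    using dadj_relpow_image[OF _ wP, of "\<lambda>v. 2 * v" ?T] by simp
  moreover have "(glueY P Q (st Q), glueY P Q (en Q)) \<in> dadj ?T ^^ m"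
    using dadj_relpow_image[OF _ wQ, of "glueY P Q" ?T] by simp
  ultimately
  have "(st ?T, en ?T) \<in> (dadj ?T)\<^sup>*"
    by (simp del: glueY_st) (metis glueY_st relpow_imp_rtrancl rtrancl_trans)
  moreover have "card (edges ?T) + 1 = card (verts ?T)"
    using card_verts_tprod[of P Q] card_edges_tprod[OF _ Q] P Q by (simp add: is_tree_def)
  moreover have "\<forall>(u, a, v) \<in> edges ?T. u \<in> verts ?T \<and> v \<in> verts ?T"
    using P Q by (fastforce simp: is_tree_def)
  ultimately show ?thesis
    using P Q tprod_connected[OF P Q] by (auto simp: is_tree_def)
qed

lemma hom_from_tprod:
  assumes "graph_hom P T fa" "fa (st P) = st T" and "graph_hom Q T fb" "fb (en Q) = en T"
    and glue: "fa (en P) = fb (st Q)"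
  shows "hom (tprod P Q) T (\<lambda>w. if even w then fa (w div 2) else fb (w div 2))"
proof -
  define h where "h = (\<lambda>w. if even w then fa (w div 2) else fb (w div 2))"
  have left: "h (2 * v) = fa v" for v by (simp add: h_def)
  have right: "h (glueY P Q v) = fb v" for v
    using glue by (cases "v = st Q") (simp_all add: h_def glueY_def)
  have "emap h ` edges (tprod P Q) = emap fa ` edges P \<union> emap fb ` edges Q"
    by (force simp: image_Un image_image emap_def left right split: prod.splits)
  then show ?thesis
    using assms left right unfolding h_def[symmetric] hom_def graph_hom_def
    by (simp add: image_Un image_image)
qed

lemma hom_tprod:
  assumes "hom A A' f" "hom Y Y' g"
  shows "\<exists>h. hom (tprod A Y) (tprod A' Y') h"
proof -
  have "graph_hom A (tprod A' Y') ((\<lambda>v. 2 * v) \<circ> f)" "graph_hom Y (tprod A' Y') (glueY A' Y' \<circ> g)"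
    using assms graph_hom_comp graph_hom_tprod_left graph_hom_tprod_right hom_iff_graph_hom by blast+
  moreover have "f (st A) = st A'" "f (en A) = en A'" "g (st Y) = st Y'" "g (en Y) = en Y'"
    using assms by (simp_all add: hom_def)
  ultimately show ?thesis
    using hom_from_tprod[of A "tprod A' Y'" "(\<lambda>v. 2 * v) \<circ> f" Y "glueY A' Y' \<circ> g"] by auto
qed

lemma hom_equiv_tprod:
  "hom_equiv A A' \<Longrightarrow> hom_equiv Y Y' \<Longrightarrow> hom_equiv (tprod A Y) (tprod A' Y')"
  unfolding hom_equiv_def using hom_tprod by blast

lemma tprod_walks:
  assumes "(st P, en P) \<in> dadj P ^^ n" "(st Q, en Q) \<in> dadj Q ^^ m"
  shows "(st (tprod P Q), 2 * en P) \<in> dadj (tprod P Q) ^^ n"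
    "(2 * en P, en (tprod P Q)) \<in> dadj (tprod P Q) ^^ m"
  using dadj_relpow_image[OF _ assms(1), of "\<lambda>v. 2 * v" "tprod P Q"]
    dadj_relpow_image[OF _ assms(2), of "glueY P Q" "tprod P Q"] by simp_all

text \<open>Even vertices come from the left factor and odd ones from the right; the glue
vertex separates them.\<close>
lemma tprod_walk_through_glue:
  assumes "(u, v) \<in> dadj (tprod P Q) ^^ k" "even u" "odd v \<or> v = 2 * en P"
  shows "\<exists>j\<le>k. (u, 2 * en P) \<in> dadj (tprod P Q) ^^ j \<and> (2 * en P, v) \<in> dadj (tprod P Q) ^^ (k - j)"
  using assms(1,3)
proof (induction k arbitrary: v)
  case 0
  then show ?case using assms(2) by auto
next
  case (Suc k)
  then obtain x a where x: "(u, x) \<in> dadj (tprod P Q) ^^ k" "(x, a, v) \<in> edges (tprod P Q)"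
    by (auto simp: dadj_def)
  then have step: "(x, v) \<in> dadj (tprod P Q)" by (auto simp: dadj_def)
  show ?case
  proof (cases "odd x \<or> x = 2 * en P")
    case True
    then obtain j where "j \<le> k" "(u, 2 * en P) \<in> dadj (tprod P Q) ^^ j"
      "(2 * en P, x) \<in> dadj (tprod P Q) ^^ (k - j)" using Suc.IH x(1) by blast
    moreover from this have "Suc k - j = Suc (k - j)" by simp
    ultimately show ?thesis using step by (intro exI[of _ j]) auto
  next
    case False
    from x(2) consider p q where "x = 2 * p" "v = 2 * q"
      | y z where "x = glueY P Q y" "v = glueY P Q z" by auto
    then have "v = 2 * en P"
    proof cases
      case (2 y z)
      then have "y = st Q" using False even_glueY_iff by metis
      then show ?thesis using False 2 by simp
    qed (use Suc.prems(2) in auto)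
    then show ?thesis using x(1) step by (intro exI[of _ "Suc k"]) auto
  qed
qed

lemma tprod_glue_unique_on_walk:
  assumes P: "is_tree P" and Q: "is_tree Q"
    and w: "(st (tprod P Q), w) \<in> dadj (tprod P Q) ^^ n" "(w, en (tprod P Q)) \<in> dadj (tprod P Q) ^^ m"
    and g: "(st (tprod P Q), 2 * en P) \<in> dadj (tprod P Q) ^^ n"
  shows "w = 2 * en P"
proof -
  let ?T = "tprod P Q"
  obtain \<phi> :: "nat \<Rightarrow> int" where \<phi>: "\<forall>(u, a, v) \<in> edges ?T. \<phi> v = \<phi> u + 1"
    using tree_level[OF tprod_is_tree[OF P Q]] by blast
  have level_eq: "\<phi> w = \<phi> (2 * en P)"
    using level_relpow[OF \<phi> w(1)] level_relpow[OF \<phi> g] by simp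
  show ?thesis
  proof (cases "even w")
    case True
    have "odd (en ?T) \<or> en ?T = 2 * en P"
      using even_glueY_iff[of P Q "en Q"] by auto
    then obtain j where "(w, 2 * en P) \<in> dadj ?T ^^ j"
      using tprod_walk_through_glue[OF w(2) True] by blast
    then have "j = 0" using level_relpow[OF \<phi>] level_eq by fastforce
    then show ?thesis using \<open>(w, 2 * en P) \<in> dadj ?T ^^ j\<close> by simp
  next
    case False
    then obtain j where "j \<le> n" "(st ?T, 2 * en P) \<in> dadj ?T ^^ j" "(2 * en P, w) \<in> dadj ?T ^^ (n - j)"
      using tprod_walk_through_glue[OF w(1)] by auto
    moreover from this(2) have "j = n"
      using level_relpow[OF \<phi>] level_eq level_relpow[OF \<phi> w(1)] by fastforce
    ultimately show ?thesis by simp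
  qed
qed

lemma hom_tprod_preserves_glue:
  assumes "is_tree P'" "is_tree Q'" and f: "hom (tprod P Q) (tprod P' Q') f"
    and "(st P, en P) \<in> dadj P ^^ n" "(st P', en P') \<in> dadj P' ^^ n" "(st Q, en Q) \<in> dadj Q ^^ m"
  shows "f (2 * en P) = 2 * en P'"
proof -
  have fE: "emap f ` edges (tprod P Q) \<subseteq> edges (tprod P' Q')"
    and "f (st (tprod P Q)) = st (tprod P' Q')" "f (en (tprod P Q)) = en (tprod P' Q')"
    using f by (auto simp: hom_def)
  then show ?thesis
    using tprod_glue_unique_on_walk[OF assms(1,2)]
      dadj_relpow_image[OF fE tprod_walks(1)[OF assms(4,6)]]
      dadj_relpow_image[OF fE tprod_walks(2)[OF assms(4,6)]]
      tprod_walks(1)[OF assms(5), of "Q'"] tree_walk[OF assms(2)]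
    by metis
qed

lemma hom_tprod_same_right_preserves_glue:
  assumes A: "is_tree A" and B: "is_tree B" and X: "is_tree X"
    and f: "hom (tprod A X) (tprod B X) f"
  shows "f (2 * en A) = 2 * en B"
proof -
  obtain nA nB m where wA: "(st A, en A) \<in> dadj A ^^ nA" and wB: "(st B, en B) \<in> dadj B ^^ nB"
    and wX: "(st X, en X) \<in> dadj X ^^ m"
    using tree_walk A B X by metis
  have fE: "emap f ` edges (tprod A X) \<subseteq> edges (tprod B X)"
    and "f (st (tprod A X)) = st (tprod B X)" "f (en (tprod A X)) = en (tprod B X)"
    using f by (auto simp: hom_def)
  then have walk_A: "(st (tprod B X), en (tprod B X)) \<in> dadj (tprod B X) ^^ (nA + m)"
    unfolding relpow_add using dadj_relpow_image[OF fE tprod_walks(1)[OF wA wX]]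
      dadj_relpow_image[OF fE tprod_walks(2)[OF wA wX]] by auto
  moreover have walk_B: "(st (tprod B X), en (tprod B X)) \<in> dadj (tprod B X) ^^ (nB + m)"
    unfolding relpow_add using tprod_walks[OF wB wX] by blast
  ultimately have "nA = nB"
    using tree_walk_length_unique[OF tprod_is_tree[OF B X] walk_A walk_B] by simp
  then show ?thesis using hom_tprod_preserves_glue[OF B X f wA _ wX] wB by simp
qed

lemma hom_tprod_same_left_preserves_glue:
  assumes "is_tree X" "is_tree A" "is_tree B" and f: "hom (tprod X A) (tprod X B) f"
  shows "f (2 * en X) = 2 * en X"
proof -
  obtain n m where "(st X, en X) \<in> dadj X ^^ n" "(st A, en A) \<in> dadj A ^^ m"
    using tree_walk assms(1,2) by blast
  then show ?thesis using hom_tprod_preserves_glue[OF assms(1,3) f] by blast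
qed

section \<open>Moving the start or end vertex to the glue vertex\<close>

lemma tprod_tplus_u: "tprod A (tplus_u X) = (tprod A X)\<lparr>en := 2 * en A\<rparr>"
proof -
  have "glueY A (tplus_u X) = glueY A X" by (simp add: glueY_def tplus_u_def fun_eq_iff)
  then show ?thesis by (simp add: tprod_def tplus_u_def)
qed

lemma tprod_tstar_u: "tprod (tstar_u X) A = (tprod X A)\<lparr>st := 2 * en X\<rparr>"
proof -
  have "glueY (tstar_u X) A = glueY X A" by (simp add: glueY_def tstar_u_def fun_eq_iff)
  then show ?thesis by (simp add: tprod_def tstar_u_def)
qed

lemma tplus_u_is_tree: "is_tree X \<Longrightarrow> is_tree (tplus_u X)"
  by (simp add: is_tree_def tplus_u_def uadj_def dadj_def)

lemma tstar_u_is_tree: "is_tree X \<Longrightarrow> is_tree (tstar_u X)"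
  by (simp add: is_tree_def tstar_u_def uadj_def dadj_def)

text \<open>The trailing copy of X is folded onto the copy of X inside A X^(+).\<close>
lemma hom_equiv_tprod_tplus_u_tprod: "hom_equiv (tprod (tprod A (tplus_u X)) X) (tprod A X)"
proof -
  define C where "C = tprod A (tplus_u X)"
  have C: "C = (tprod A X)\<lparr>en := 2 * en A\<rparr>" by (simp add: C_def tprod_tplus_u)
  have gA: "graph_hom A (tprod C X) ((\<lambda>v. 2 * v) \<circ> (\<lambda>v. 2 * v))"
    using graph_hom_comp graph_hom_tprod_left[of A X] graph_hom_tprod_left[of C X] C by simp
  have "hom (tprod C X) (tprod A X) (\<lambda>w. if even w then w div 2 else glueY A X (w div 2))"
    by (rule hom_from_tprod) (simp_all add: C graph_hom_id graph_hom_tprod_right)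
  moreover have "hom (tprod A X) (tprod C X)
      (\<lambda>w. if even w then ((\<lambda>v. 2 * v) \<circ> (\<lambda>v. 2 * v)) (w div 2) else glueY C X (w div 2))"
    by (rule hom_from_tprod[OF gA _ graph_hom_tprod_right]) (simp_all add: C)
  ultimately show ?thesis unfolding hom_equiv_def C_def by blast
qed

lemma hom_equiv_tprod_tprod_tstar_u: "hom_equiv (tprod X (tprod (tstar_u X) A)) (tprod X A)"
proof -
  define D where "D = tprod (tstar_u X) A"
  have D: "D = (tprod X A)\<lparr>st := 2 * en X\<rparr>" by (simp add: D_def tprod_tstar_u)
  have gA: "graph_hom A (tprod X D) (glueY X D \<circ> glueY X A)"
    using graph_hom_comp graph_hom_tprod_right[of A X] graph_hom_tprod_right[of D X] D by simp
  have "hom (tprod X D) (tprod X A) (\<lambda>w. if even w then 2 * (w div 2) else w div 2)"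
    by (rule hom_from_tprod) (simp_all add: D graph_hom_id graph_hom_tprod_left)
  moreover have "hom (tprod X A) (tprod X D)
      (\<lambda>w. if even w then 2 * (w div 2) else (glueY X D \<circ> glueY X A) (w div 2))"
    by (rule hom_from_tprod[OF graph_hom_tprod_left _ gA]) (simp_all add: D glueY_def)
  ultimately show ?thesis unfolding hom_equiv_def D_def by blast
qed

lemma hom_equiv_tprod_iff_tplus_u:
  assumes "is_tree A" "is_tree B" "is_tree X"
  shows "hom_equiv (tprod A X) (tprod B X) \<longleftrightarrow> hom_equiv (tprod A (tplus_u X)) (tprod B (tplus_u X))"
proof
  assume "hom_equiv (tprod A X) (tprod B X)"
  then obtain f g where f: "hom (tprod A X) (tprod B X) f" and g: "hom (tprod B X) (tprod A X) g"
    unfolding hom_equiv_def by blast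
  show "hom_equiv (tprod A (tplus_u X)) (tprod B (tplus_u X))"
    unfolding hom_equiv_def tprod_tplus_u
    using hom_upd_en[OF f hom_tprod_same_right_preserves_glue[OF assms f]]
      hom_upd_en[OF g hom_tprod_same_right_preserves_glue[OF assms(2,1,3) g]] by blast
next
  assume "hom_equiv (tprod A (tplus_u X)) (tprod B (tplus_u X))"
  then have "hom_equiv (tprod (tprod A (tplus_u X)) X) (tprod (tprod B (tplus_u X)) X)"
    using hom_equiv_tprod hom_equiv_refl by blast
  then show "hom_equiv (tprod A X) (tprod B X)"
    using hom_equiv_cong[OF hom_equiv_tprod_tplus_u_tprod hom_equiv_tprod_tplus_u_tprod] by blast
qed

lemma hom_equiv_tprod_iff_tstar_u:
  assumes "is_tree A" "is_tree B" "is_tree X"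
  shows "hom_equiv (tprod X A) (tprod X B) \<longleftrightarrow> hom_equiv (tprod (tstar_u X) A) (tprod (tstar_u X) B)"
proof
  assume "hom_equiv (tprod X A) (tprod X B)"
  then obtain f g where f: "hom (tprod X A) (tprod X B) f" and g: "hom (tprod X B) (tprod X A) g"
    unfolding hom_equiv_def by blast
  show "hom_equiv (tprod (tstar_u X) A) (tprod (tstar_u X) B)"
    unfolding hom_equiv_def tprod_tstar_u
    using hom_upd_st[OF f hom_tprod_same_left_preserves_glue[OF assms(3,1,2) f]]
      hom_upd_st[OF g hom_tprod_same_left_preserves_glue[OF assms(3,2,1) g]] by blast
next
  assume "hom_equiv (tprod (tstar_u X) A) (tprod (tstar_u X) B)"
  then have "hom_equiv (tprod X (tprod (tstar_u X) A)) (tprod X (tprod (tstar_u X) B))"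
    using hom_equiv_tprod hom_equiv_refl by blast
  then show "hom_equiv (tprod X A) (tprod X B)"
    using hom_equiv_cong[OF hom_equiv_tprod_tprod_tstar_u hom_equiv_tprod_tprod_tstar_u] by blast
qed

lemma iso_pmult_iff_hom_equiv:
  assumes "is_tree S" "is_tree T" "is_tree S'" "is_tree T'"
  shows "iso (pmult S T) (pmult S' T') \<longleftrightarrow> hom_equiv (tprod S T) (tprod S' T')"
  unfolding pmult_def using assms by (simp add: iso_prune_iff_hom_equiv tprod_is_tree)

lemma pplus_tree_hom_equiv:
  assumes "is_tree X"
  shows "is_tree (pplus X)" "hom_equiv (tplus_u X) (pplus X)"
  using prune_pruned_hom_equiv[OF tplus_u_is_tree[OF assms]] hom_equiv_sym
  unfolding pplus_def pruned_def by blast+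

lemma pstar_tree_hom_equiv:
  assumes "is_tree X"
  shows "is_tree (pstar X)" "hom_equiv (tstar_u X) (pstar X)"
  using prune_pruned_hom_equiv[OF tstar_u_is_tree[OF assms]] hom_equiv_sym
  unfolding pstar_def pruned_def by blast+

theorem proposition4p9:
  fixes A B X :: "'l stree"
  assumes "pruned A" and "pruned B" and "pruned X"
  shows "(iso (pmult A X) (pmult B X) \<longleftrightarrow> iso (pmult A (pplus X)) (pmult B (pplus X)))
       \<and> (iso (pmult X A) (pmult X B) \<longleftrightarrow> iso (pmult (pstar X) A) (pmult (pstar X) B))"
proof -
  have A: "is_tree A" and B: "is_tree B" and X: "is_tree X"
    using assms by (simp_all add: pruned_def)
  note plus = pplus_tree_hom_equiv[OF X] and star = pstar_tree_hom_equiv[OF X]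
  have "iso (pmult A X) (pmult B X) \<longleftrightarrow> hom_equiv (tprod A X) (tprod B X)"
    by (rule iso_pmult_iff_hom_equiv[OF A X B X])
  also have "\<dots> \<longleftrightarrow> hom_equiv (tprod A (tplus_u X)) (tprod B (tplus_u X))"
    by (rule hom_equiv_tprod_iff_tplus_u[OF A B X])
  also have "\<dots> \<longleftrightarrow> hom_equiv (tprod A (pplus X)) (tprod B (pplus X))"
    by (intro hom_equiv_cong hom_equiv_tprod hom_equiv_refl plus(2))
  also have "\<dots> \<longleftrightarrow> iso (pmult A (pplus X)) (pmult B (pplus X))"
    by (rule iso_pmult_iff_hom_equiv[OF A plus(1) B plus(1), symmetric])
  finally have plus_case: "iso (pmult A X) (pmult B X) \<longleftrightarrow> iso (pmult A (pplus X)) (pmult B (pplus X))" .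
  have "iso (pmult X A) (pmult X B) \<longleftrightarrow> hom_equiv (tprod X A) (tprod X B)"
    by (rule iso_pmult_iff_hom_equiv[OF X A X B])
  also have "\<dots> \<longleftrightarrow> hom_equiv (tprod (tstar_u X) A) (tprod (tstar_u X) B)"
    by (rule hom_equiv_tprod_iff_tstar_u[OF A B X])
  also have "\<dots> \<longleftrightarrow> hom_equiv (tprod (pstar X) A) (tprod (pstar X) B)"
    by (intro hom_equiv_cong hom_equiv_tprod hom_equiv_refl star(2))
  also have "\<dots> \<longleftrightarrow> iso (pmult (pstar X) A) (pmult (pstar X) B)"
    by (rule iso_pmult_iff_hom_equiv[OF star(1) A star(1) B, symmetric])
  finally show ?thesis using plus_case by blast
qed

end
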